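(* Let $\mathbf v=(v_1,\dots,v_m)$ and $\mathbf k=(k_1,\dots,k_m)$ be $m$-tuples of positive integers with $\mathbf v\ge\mathbf k$ and $\sum_i k_i\ge2$, and $\mathbf w=(w_1,\dots,w_n)$ and $\boldsymbol\ell=(\ell_1,\dots,\ell_n)$ be $n$-tuples of positive integers with $\mathbf w\ge\boldsymbol\ell$ and $\sum_i\ell_i\ge2$. Then \[ C(\mathrm{cat}(\mathbf v,\mathbf w),\mathrm{cat}(\mathbf k,\boldsymbol\ell),2)\ \le\ \max\{C(\mathbf v,\mathbf k,2),C(\mathbf w,\boldsymbol\ell,2)\}+\left(\max_{i=1,\dots,m}\left\lceil\frac{v_i}{k_i}\right\rceil\right)\left(\max_{i=1,\dots,n}\left\lceil\frac{w_i}{\ell_i}\right\rceil\right). \]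
   Context: $\mathrm{cat}(\mathbf a,\mathbf b)$ denotes concatenation of tuples. For tuples $\mathbf a,\mathbf b$ of positive integers of the same length $p$ with $\mathbf b\le\mathbf a$ entrywise: let $Y_1,\dots,Y_p$ be pairwise disjoint sets with $|Y_i|=a_i$; a block is a $p$-tuple $(B_1,\dots,B_p)$ with $B_i\subseteq Y_i$, $|B_i|=b_i$; a $p$-tuple of sets $(T_1,\dots,T_p)$ is $(\mathbf a,\mathbf b,2)$-admissible if $T_i\subseteq Y_i$, $|T_i|\le b_i$ and $\sum|T_i|=2$, and is contained in a block if $T_i\subseteq B_i$ for all $i$. A ${\rm GC}(\mathbf a,\mathbf b,2)$ is a finite family (repetitions allowed) of blocks containing every admissible tuple in at least one block; $C(\mathbf a,\mathbf b,2)$ is the minimum number of blocks. *)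

theory Defs
  imports Main Complex_Main
begin

text \<open>The p disjoint ground sets
Y_1..Y_p are modelled by index i (0-based) with Y_i = {..<a!i} tagged by i; a p-tuple
of sets is a function nat => nat set that is empty outside indices < p.\<close>

definition is_block :: "nat list \<Rightarrow> nat list \<Rightarrow> (nat \<Rightarrow> nat set) \<Rightarrow> bool" where
  "is_block a b B \<longleftrightarrow>
     (\<forall>i<length a. B i \<subseteq> {..<a!i} \<and> card (B i) = b!i) \<and> (\<forall>i\<ge>length a. B i = {})"

definition admissible :: "nat list \<Rightarrow> nat list \<Rightarrow> nat \<Rightarrow> (nat \<Rightarrow> nat set) \<Rightarrow> bool" where
  "admissible a b t T \<longleftrightarrow>
     (\<forall>i<length a. T i \<subseteq> {..<a!i} \<and> card (T i) \<le> b!i) \<and> (\<forall>i\<ge>length a. T i = {}) \<and>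
     (\<Sum>i<length a. card (T i)) = t"

definition contained_in :: "(nat \<Rightarrow> nat set) \<Rightarrow> (nat \<Rightarrow> nat set) \<Rightarrow> bool" where
  "contained_in T B \<longleftrightarrow> (\<forall>i. T i \<subseteq> B i)"

text \<open>A GC(a,b,t): a finite family (list, repetitions allowed) of blocks covering every
admissible tuple.\<close>
definition is_GC :: "nat list \<Rightarrow> nat list \<Rightarrow> nat \<Rightarrow> (nat \<Rightarrow> nat set) list \<Rightarrow> bool" where
  "is_GC a b t Bs \<longleftrightarrow> (\<forall>B\<in>set Bs. is_block a b B) \<and>
     (\<forall>T. admissible a b t T \<longrightarrow> (\<exists>B\<in>set Bs. contained_in T B))"

definition C :: "nat list \<Rightarrow> nat list \<Rightarrow> nat \<Rightarrow> nat" where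
  "C a b t = (LEAST N. \<exists>Bs. is_GC a b t Bs \<and> length Bs = N)"

end

theory Submission
  imports Defs
begin

text \<open>Split the ground sets into the first half (indexed by \<open>v\<close>) and the second half
(indexed by \<open>w\<close>). An admissible pair of points either lies in one half, or has one point
in each half. Padding optimal GC(v,k,2) and GC(w,l,2) to a common length and concatenating
their blocks index by index covers pairs of the first kind with \<open>max (C v k 2) (C w l 2)\<close>
blocks. Pairs of the second kind are covered by concatenating every block of a point cover,
i.e. a GC(v,k,1), of the first half with every block of a point cover of the second half;
cutting each ground set into consecutive windows of width \<open>k\<^sub>i\<close> gives a point cover with
\<open>max\<^sub>i \<lceil>v\<^sub>i / k\<^sub>i\<rceil>\<close> blocks.\<close>

definition cat_tuple :: "nat \<Rightarrow> (nat \<Rightarrow> 'a set) \<Rightarrow> (nat \<Rightarrow> 'a set) \<Rightarrow> nat \<Rightarrow> 'a set" where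
  "cat_tuple m S T = (\<lambda>i. if i < m then S i else T (i - m))"

lemma is_block_cat_tuple:
  assumes "length b = length a" "is_block a b S" "is_block c d T"
  shows "is_block (a @ c) (b @ d) (cat_tuple (length a) S T)"
  using assms unfolding is_block_def cat_tuple_def by (auto simp: nth_append)

lemma contained_in_cat_tuple:
  "contained_in S B \<Longrightarrow> contained_in T D \<Longrightarrow> contained_in (cat_tuple m S T) (cat_tuple m B D)"
  unfolding contained_in_def cat_tuple_def by auto

lemma sum_lessThan_add:
  fixes f :: "nat \<Rightarrow> 'b::comm_monoid_add"
  shows "(\<Sum>i<m + n. f i) = (\<Sum>i<m. f i) + (\<Sum>j<n. f (j + m))"
  by (induction n) (simp_all add: ac_simps)

lemma admissible_append_split:
  assumes len: "length b = length a" and T: "admissible (a @ c) (b @ d) t T"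
  obtains S U t\<^sub>1 t\<^sub>2 where "T = cat_tuple (length a) S U"
    "admissible a b t\<^sub>1 S" "admissible c d t\<^sub>2 U" "t\<^sub>1 + t\<^sub>2 = t"
proof
  let ?m = "length a"
  define S where "S = (\<lambda>i. if i < ?m then T i else {})"
  define U where "U = (\<lambda>j. T (j + ?m))"
  have T_in: "T i \<subseteq> {..<(a @ c)!i} \<and> card (T i) \<le> (b @ d)!i" if "i < length (a @ c)" for i
    using T that unfolding admissible_def by blast
  have T_left: "T i \<subseteq> {..<a!i} \<and> card (T i) \<le> b!i" if "i < ?m" for i
    using T_in[of i] that len by (simp add: nth_append)
  have T_right: "T (j + ?m) \<subseteq> {..<c!j} \<and> card (T (j + ?m)) \<le> d!j" if "j < length c" for j
    using T_in[of "j + ?m"] that len by (simp add: nth_append)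
  have T_out: "T i = {}" if "length a + length c \<le> i" for i
    using T that unfolding admissible_def by simp
  show "T = cat_tuple ?m S U"
    by (rule ext) (simp add: cat_tuple_def S_def U_def)
  show "admissible a b (\<Sum>i<?m. card (S i)) S"
    using T_left unfolding admissible_def S_def by simp
  show "admissible c d (\<Sum>j<length c. card (U j)) U"
    using T_right T_out unfolding admissible_def U_def by simp
  show "(\<Sum>i<?m. card (S i)) + (\<Sum>j<length c. card (U j)) = t"
    using T sum_lessThan_add[of "\<lambda>i. card (T i)" ?m "length c"]
    by (simp add: admissible_def S_def U_def)
qed

lemma admissible_zero_eq_empty:
  assumes "admissible a b 0 T"
  shows "T = (\<lambda>_. {})"
proof
  fix i
  show "T i = {}"
  proof (cases "i < length a")
    case True
    with assms have "T i \<subseteq> {..<a!i}" "card (T i) = 0"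
      by (auto simp: admissible_def)
    then show ?thesis by (meson card_0_eq finite_lessThan finite_subset)
  qed (use assms in \<open>auto simp: admissible_def\<close>)
qed

lemma admissible_one_eq_singleton:
  assumes "admissible a b 1 T"
  obtains i x where "i < length a" "x < a!i" "T = (\<lambda>j. if j = i then {x} else {})"
proof -
  obtain i where i: "i < length a" "card (T i) = 1"
    and others: "\<And>j. j < length a \<Longrightarrow> j \<noteq> i \<Longrightarrow> card (T j) = 0"
    using assms sum_eq_1_iff[of "{..<length a}" "\<lambda>j. card (T j)"]
    by (auto simp: admissible_def)
  obtain x where x: "T i = {x}" using i(2) card_1_singletonE by blast
  have "T j = {}" if "j \<noteq> i" for j
  proof (cases "j < length a")
    case True
    with assms have "finite (T j)" by (meson admissible_def finite_lessThan finite_subset)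
    with others[OF True that] show ?thesis by simp
  qed (use assms in \<open>auto simp: admissible_def\<close>)
  then have "T = (\<lambda>j. if j = i then {x} else {})" using x by (intro ext) auto
  moreover have "x < a!i" using assms i(1) x by (auto simp: admissible_def)
  ultimately show ?thesis using that i(1) by blast
qed

lemma is_GC_append_blocks:
  "is_GC a b t Bs \<Longrightarrow> \<forall>B\<in>set Ds. is_block a b B \<Longrightarrow> is_GC a b t (Bs @ Ds)"
  unfolding is_GC_def by auto

lemma finite_blocks: "finite {B. is_block a b B}"
proof (rule finite_subset)
  show "{B. is_block a b B} \<subseteq>
      {B. \<forall>i. (i \<in> {..<length a} \<longrightarrow> B i \<in> Pow {..<sum_list a}) \<and> (i \<notin> {..<length a} \<longrightarrow> B i = {})}"
    by (force simp: is_block_def dest: elem_le_sum_list)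
qed (intro finite_set_of_finite_funs; simp)

lemma admissible_contained_in_block:
  assumes le: "\<forall>i<length a. b!i \<le> a!i" and T: "admissible a b t T"
  obtains B where "is_block a b B" "contained_in T B"
proof -
  have "\<exists>Y. T i \<subseteq> Y \<and> Y \<subseteq> {..<a!i} \<and> card Y = b!i" if "i < length a" for i
    using exists_subset_between[of "T i" "b!i" "{..<a!i}"] le T that
    by (auto simp: admissible_def)
  then obtain Y where Y: "\<And>i. i < length a \<Longrightarrow> T i \<subseteq> Y i \<and> Y i \<subseteq> {..<a!i} \<and> card (Y i) = b!i"
    by metis
  define B where "B = (\<lambda>i. if i < length a then Y i else {})"
  have "is_block a b B" using Y by (auto simp: is_block_def B_def)
  moreover have "contained_in T B"
    using Y T by (auto simp: contained_in_def B_def admissible_def)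
  ultimately show ?thesis using that by blast
qed

lemma is_GC_exists:
  assumes "\<forall>i<length a. b!i \<le> a!i"
  shows "\<exists>Bs. is_GC a b t Bs"
proof -
  obtain Bs where Bs: "set Bs = {B. is_block a b B}"
    using finite_list[OF finite_blocks] by blast
  have "is_GC a b t Bs"
    unfolding is_GC_def Bs using admissible_contained_in_block[OF assms] by blast
  then show ?thesis ..
qed

lemma C_obtains_GC:
  assumes "\<forall>i<length a. b!i \<le> a!i"
  obtains Bs where "is_GC a b t Bs" "length Bs = C a b t"
  using LeastI_ex[where P = "\<lambda>N. \<exists>Bs. is_GC a b t Bs \<and> length Bs = N"] is_GC_exists[OF assms]
  unfolding C_def by blast

lemma C_le_length: "is_GC a b t Bs \<Longrightarrow> C a b t \<le> length Bs"
  unfolding C_def by (rule Least_le) blast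

lemma is_GC_of_length:
  assumes le: "\<forall>i<length a. b!i \<le> a!i" and N: "C a b t \<le> N"
  obtains Bs where "is_GC a b t Bs" "length Bs = N"
proof -
  obtain Bs where Bs: "is_GC a b t Bs" "length Bs = C a b t"
    using C_obtains_GC[OF le] .
  define B\<^sub>0 where "B\<^sub>0 = (\<lambda>i. if i < length a then {..<b!i} else {})"
  have "is_block a b B\<^sub>0" using le by (auto simp: is_block_def B\<^sub>0_def)
  then have "is_GC a b t (Bs @ replicate (N - C a b t) B\<^sub>0)"
    using is_GC_append_blocks[OF Bs(1)] by simp
  moreover have "length (Bs @ replicate (N - C a b t) B\<^sub>0) = N" using Bs(2) N by simp
  ultimately show ?thesis using that by blast
qed

text \<open>The \<open>s\<close>-th window \<open>[s b\<^sub>i, (s+1) b\<^sub>i)\<close> of each ground set, shifted left where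
necessary so that it stays inside \<open>{..<a\<^sub>i}\<close>.\<close>

definition window_block :: "nat list \<Rightarrow> nat list \<Rightarrow> nat \<Rightarrow> nat \<Rightarrow> nat set" where
  "window_block a b s = (\<lambda>i. if i < length a
     then {min (s * b!i) (a!i - b!i) ..< min (s * b!i) (a!i - b!i) + b!i} else {})"

lemma is_block_window_block:
  assumes "\<forall>i<length a. b!i \<le> a!i"
  shows "is_block a b (window_block a b s)"
proof -
  have "min (s * b!i) (a!i - b!i) + b!i \<le> a!i" if "i < length a" for i
    using assms[rule_format, OF that] by (simp add: min_def le_diff_conv2)
  then show ?thesis unfolding is_block_def window_block_def by fastforce
qed

lemma mem_window_block:
  assumes "i < length a" "0 < b!i" "x < a!i"
  shows "x \<in> window_block a b (x div b!i) i"
proof -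
  have "x div b!i * b!i \<le> x" "x < x div b!i * b!i + b!i"
    using assms(2) div_mult_mod_eq[of x "b!i"] mod_less_divisor[of "b!i" x] by linarith+
  then show ?thesis using assms by (auto simp: window_block_def min_le_iff_disj)
qed

lemma div_less_nat_ceiling:
  fixes x a b :: nat
  assumes "x < a" "0 < b"
  shows "x div b < nat \<lceil>real a / real b\<rceil>"
proof -
  have "x div b * b < a" using assms(1) div_times_less_eq_dividend le_less_trans by blast
  then have "real (x div b) < real a / real b"
    using assms(2) by (simp add: field_simps flip: of_nat_mult)
  also have "\<dots> \<le> of_int \<lceil>real a / real b\<rceil>" by (rule le_of_int_ceiling)
  finally show ?thesis by linarith
qed

lemma is_GC_one_by_windows:
  assumes "\<forall>i<length a. 0 < b!i \<and> b!i \<le> a!i"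
  obtains Ps where "is_GC a b 1 Ps"
    "length Ps = (MAX i\<in>{..<length a}. nat \<lceil>real (a!i) / real (b!i)\<rceil>)"
proof
  let ?M = "MAX i\<in>{..<length a}. nat \<lceil>real (a!i) / real (b!i)\<rceil>"
  show "length (map (window_block a b) [0..<?M]) = ?M" by simp
  show "is_GC a b 1 (map (window_block a b) [0..<?M])"
    unfolding is_GC_def
  proof (intro conjI ballI allI impI)
    fix B assume "B \<in> set (map (window_block a b) [0..<?M])"
    then show "is_block a b B" using assms is_block_window_block by auto
  next
    fix T assume "admissible a b 1 T"
    then obtain i x where i: "i < length a" "x < a!i" and T: "T = (\<lambda>j. if j = i then {x} else {})"
      by (rule admissible_one_eq_singleton)
    have "x div b!i < nat \<lceil>real (a!i) / real (b!i)\<rceil>"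
      using i assms div_less_nat_ceiling by blast
    also have "\<dots> \<le> ?M" using i by (intro Max_ge) auto
    finally have "window_block a b (x div b!i) \<in> set (map (window_block a b) [0..<?M])"
      by simp
    moreover have "contained_in T (window_block a b (x div b!i))"
      using mem_window_block[OF i(1) _ i(2)] assms i(1) by (simp add: contained_in_def T)
    ultimately show "\<exists>B\<in>set (map (window_block a b) [0..<?M]). contained_in T B" by blast
  qed
qed

lemma is_GC_two_append:
  assumes len: "length b = length a"
    and Bs: "is_GC a b 2 Bs" and Ds: "is_GC c d 2 Ds" and same_length: "length Bs = length Ds"
    and Ps: "is_GC a b 1 Ps" and Qs: "is_GC c d 1 Qs"
  shows "is_GC (a @ c) (b @ d) 2
    (map2 (cat_tuple (length a)) Bs Ds @ [cat_tuple (length a) P Q. P \<leftarrow> Ps, Q \<leftarrow> Qs])"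
    (is "is_GC _ _ _ (?paired @ ?products)")
  unfolding is_GC_def
proof (intro conjI ballI allI impI)
  fix B assume "B \<in> set (?paired @ ?products)"
  then consider (paired) B' D' where "(B', D') \<in> set (zip Bs Ds)" "B = cat_tuple (length a) B' D'"
    | (product) P Q where "P \<in> set Ps" "Q \<in> set Qs" "B = cat_tuple (length a) P Q"
    by auto
  then show "is_block (a @ c) (b @ d) B"
  proof cases
    case paired
    then have "B' \<in> set Bs" "D' \<in> set Ds" by (auto dest: set_zip_leftD set_zip_rightD)
    with Bs Ds show ?thesis unfolding is_GC_def paired(2) by (simp add: is_block_cat_tuple[OF len])
  next
    case product
    with Ps Qs show ?thesis unfolding is_GC_def product(3) by (simp add: is_block_cat_tuple[OF len])
  qed
next
  fix T assume "admissible (a @ c) (b @ d) 2 T"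
  then obtain S U t\<^sub>1 t\<^sub>2 where T: "T = cat_tuple (length a) S U"
    and S: "admissible a b t\<^sub>1 S" and U: "admissible c d t\<^sub>2 U" and t: "t\<^sub>1 + t\<^sub>2 = 2"
    by (rule admissible_append_split[OF len])
  have empty_contained: "contained_in (\<lambda>_. {}) B" for B :: "nat \<Rightarrow> nat set"
    by (simp add: contained_in_def)
  consider "t\<^sub>1 = 2" "t\<^sub>2 = 0" | "t\<^sub>1 = 0" "t\<^sub>2 = 2" | "t\<^sub>1 = 1" "t\<^sub>2 = 1" using t by linarith
  then show "\<exists>B\<in>set (?paired @ ?products). contained_in T B"
  proof cases
    case 1
    obtain B where "B \<in> set Bs" and SB: "contained_in S B" using Bs S 1 by (auto simp: is_GC_def)
    then obtain D where "(B, D) \<in> set (zip Bs Ds)" using same_length in_set_impl_in_set_zip1 by metis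
    then have "cat_tuple (length a) B D \<in> set ?paired" by force
    moreover have "contained_in T (cat_tuple (length a) B D)"
      using admissible_zero_eq_empty[OF U[unfolded 1(2)]] contained_in_cat_tuple[OF SB empty_contained]
      unfolding T by simp
    ultimately show ?thesis by auto
  next
    case 2
    obtain D where "D \<in> set Ds" and UD: "contained_in U D" using Ds U 2 by (auto simp: is_GC_def)
    then obtain B where "(B, D) \<in> set (zip Bs Ds)" using same_length in_set_impl_in_set_zip2 by metis
    then have "cat_tuple (length a) B D \<in> set ?paired" by force
    moreover have "contained_in T (cat_tuple (length a) B D)"
      using admissible_zero_eq_empty[OF S[unfolded 2(1)]] contained_in_cat_tuple[OF empty_contained UD]
      unfolding T by simp
    ultimately show ?thesis by auto
  next
    case 3
    obtain P where "P \<in> set Ps" and SP: "contained_in S P"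
      using Ps S unfolding 3 is_GC_def by blast
    obtain Q where "Q \<in> set Qs" and UQ: "contained_in U Q"
      using Qs U unfolding 3 is_GC_def by blast
    then have "cat_tuple (length a) P Q \<in> set ?products" using \<open>P \<in> set Ps\<close> by auto
    then show ?thesis using contained_in_cat_tuple[OF SP UQ] unfolding T by auto
  qed
qed

theorem corollary6p4:
  fixes v k w l :: "nat list"
  assumes "length k = length v" and "length l = length w"
    and "\<forall>i<length v. 0 < k!i \<and> k!i \<le> v!i"
    and "\<forall>i<length w. 0 < l!i \<and> l!i \<le> w!i"
    and "sum_list k \<ge> 2" and "sum_list l \<ge> 2"
  shows "C (v @ w) (k @ l) 2 \<le> max (C v k 2) (C w l 2)
           + (MAX i\<in>{..<length v}. nat \<lceil>real (v!i) / real (k!i)\<rceil>)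
           * (MAX i\<in>{..<length w}. nat \<lceil>real (w!i) / real (l!i)\<rceil>)"
proof -
  let ?N = "max (C v k 2) (C w l 2)"
  obtain Bs where Bs: "is_GC v k 2 Bs" "length Bs = ?N"
    using is_GC_of_length[of v k 2 ?N] assms(3) by auto
  obtain Ds where Ds: "is_GC w l 2 Ds" "length Ds = ?N"
    using is_GC_of_length[of w l 2 ?N] assms(4) by auto
  obtain Ps where Ps: "is_GC v k 1 Ps"
    "length Ps = (MAX i\<in>{..<length v}. nat \<lceil>real (v!i) / real (k!i)\<rceil>)"
    using is_GC_one_by_windows assms(3) by blast
  obtain Qs where Qs: "is_GC w l 1 Qs"
    "length Qs = (MAX i\<in>{..<length w}. nat \<lceil>real (w!i) / real (l!i)\<rceil>)"
    using is_GC_one_by_windows assms(4) by blast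
  have "C (v @ w) (k @ l) 2 \<le>
      length (map2 (cat_tuple (length v)) Bs Ds @ [cat_tuple (length v) P Q. P \<leftarrow> Ps, Q \<leftarrow> Qs])"
    using assms(1) Bs Ds Ps Qs by (intro C_le_length is_GC_two_append) simp_all
  also have "\<dots> = ?N + length Ps * length Qs"
    using Bs(2) Ds(2) by (simp add: length_concat comp_def sum_list_triv)
  finally show ?thesis using Ps(2) Qs(2) by simp
qed

end
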